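(* Fix $j\ge1$, $\alpha>0$, $\ell>0$, $p\in\mathbb{N}$. In the modified GPORT with immigration $\mathcal{T}_{\alpha,\ell}$, let $B_{N,m}$ be the number of children of the root $0$ whose subtree has exactly $m$ nodes, after $N$ insertions. Let $(Z_{N,0},\dots,Z_{N,j+1})_{N\ge0}$ be the urn described in the context. Then the processes $\big(B_{N,1},\dots,B_{N,j}\big)_{N\ge0}$ and $\Big(\frac{Z_{N,1}}{(\alpha+1)-1},\frac{Z_{N,2}}{2(\alpha+1)-1},\dots,\frac{Z_{N,j}}{j(\alpha+1)-1}\Big)_{N\ge0}$ have the same law.
   Context: Modified GPORT with immigration $\mathcal{T}_{\alpha,\ell}$ (period $p$): at time $0$ a single root labelled $0$; at time $N$ there are ordinary nodes $1,\dots,N$, root $0$ and $\lfloor N/p\rfloor$ immigrant roots; node $N+1$ attaches to an ordinary node $v$ w.p. $(d(v)+\alpha)/C_N$ and to a root $v$ (root $0$ or immigrant) w.p. $(d(v)+\ell)/C_N$, $d(v)$ the out-degree, $C_N=(1+\alpha)N+(\lfloor N/p\rfloor+1)\ell$; after attaching node $N+1$, if $p\mid(N+1)$ a new isolated immigrant root is added. Urn with colours $0,1,\dots,j+1$ (real amounts): $Z_{0,\cdot}=(\ell,0,\dots,0)$. At draw number $N+1$ ($N\ge0$), colour $i$ is drawn w.p. $Z_{N,i}/\sum_{i'}Z_{N,i'}$. Drawing colour $0$: add $1$ to colour $0$ and $\alpha$ to colour $1$. Drawing colour $m$, $1\le m\le j$: remove $m(\alpha+1)-1$ from colour $m$ and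 add $(m+1)(\alpha+1)-1$ to colour $m+1$. Drawing colour $j+1$: add $1+\alpha$ to colour $j+1$. In addition, if $p\mid(N+1)$, add $\ell$ to colour $j+1$ (regardless of the drawn colour). *)

theory Defs
  imports "HOL-Probability.Probability"
begin

fun traj_law :: "('s \<Rightarrow> 's pmf) \<Rightarrow> 's \<Rightarrow> nat \<Rightarrow> 's list pmf" where
  "traj_law K s 0 = return_pmf [s]"
| "traj_law K s (Suc n) = bind_pmf (traj_law K s n) (\<lambda>xs. map_pmf (\<lambda>t. xs @ [t]) (K (last xs)))"

text \<open>Node labels: the root 0, immigrant roots Imm i (i = 1,2,...), ordinary nodes Ord k (k = 1,2,...).\<close>
datatype node = Root0 | Imm nat | Ord nat

text \<open>A tree after N insertions is the list par of length N, where par ! (k-1) is the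
  parent of ordinary node k. The number of immigrant roots is N div p.\<close>
type_synonym tree = "node list"

definition outdeg :: "tree \<Rightarrow> node \<Rightarrow> real" where
  "outdeg par v = real (card {k \<in> {1..length par}. par ! (k - 1) = v})"

definition tree_step :: "real \<Rightarrow> real \<Rightarrow> nat \<Rightarrow> tree \<Rightarrow> tree pmf" where
  "tree_step \<alpha> l p par =
     (let N = length par;
          C = (1 + \<alpha>) * real N + (real (N div p) + 1) * l;
          cands = Root0 # map Imm [1..<N div p + 1] @ map Ord [1..<N + 1];
          w = (\<lambda>v. (case v of Ord _ \<Rightarrow> outdeg par v + \<alpha> | _ \<Rightarrow> outdeg par v + l) / C)
      in map_pmf (\<lambda>v. par @ [v]) (pmf_of_list (map (\<lambda>v. (v, w v)) cands)))"

definition parent_rel :: "tree \<Rightarrow> (nat \<times> nat) set" where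
  "parent_rel par = {(k, k'). 1 \<le> k \<and> k \<le> length par \<and> par ! (k - 1) = Ord k'}"

definition subtree_size :: "tree \<Rightarrow> nat \<Rightarrow> nat" where
  "subtree_size par c = card {k \<in> {1..length par}. (k, c) \<in> (parent_rel par)\<^sup>*}"

definition B :: "tree \<Rightarrow> nat \<Rightarrow> nat" where
  "B par m = card {c \<in> {1..length par}. par ! (c - 1) = Root0 \<and> subtree_size par c = m}"

definition B_vec :: "nat \<Rightarrow> tree \<Rightarrow> real list" where
  "B_vec j par = map (\<lambda>m. real (B par m)) [1..<j + 1]"

text \<open>State (N, Z): N draws done, Z i the (real) amount of colour i, i = 0..j+1.\<close>
type_synonym urn = "nat \<times> (nat \<Rightarrow> real)"

definition urn_init :: "real \<Rightarrow> urn" where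
  "urn_init l = (0, (\<lambda>_. 0)(0 := l))"

definition urn_update :: "real \<Rightarrow> real \<Rightarrow> nat \<Rightarrow> nat \<Rightarrow> nat \<Rightarrow> (nat \<Rightarrow> real) \<Rightarrow> nat \<Rightarrow> (nat \<Rightarrow> real)" where
  "urn_update \<alpha> l p j N Z i =
     (let Z' = (if i = 0 then Z(0 := Z 0 + 1, 1 := Z 1 + \<alpha>)
                else if i \<le> j then
                  Z(i := Z i - (real i * (\<alpha> + 1) - 1),
                    i + 1 := Z (i + 1) + (real (i + 1) * (\<alpha> + 1) - 1))
                else Z(j + 1 := Z (j + 1) + (1 + \<alpha>)))
      in if p dvd (N + 1) then Z'(j + 1 := Z' (j + 1) + l) else Z')"

definition urn_step :: "real \<Rightarrow> real \<Rightarrow> nat \<Rightarrow> nat \<Rightarrow> urn \<Rightarrow> urn pmf" where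
  "urn_step \<alpha> l p j s =
     (case s of (N, Z) \<Rightarrow>
        map_pmf (\<lambda>i. (N + 1, urn_update \<alpha> l p j N Z i))
          (pmf_of_list (map (\<lambda>i. (i, Z i / (\<Sum>i'\<in>{0..j + 1}. Z i'))) [0..<j + 2])))"

definition Z_vec :: "real \<Rightarrow> nat \<Rightarrow> urn \<Rightarrow> real list" where
  "Z_vec \<alpha> j s = map (\<lambda>m. snd s m / (real m * (\<alpha> + 1) - 1)) [1..<j + 1]"

end

theory Submission
  imports Defs
begin

text \<open>Give every possible parent of the next node a colour: 0 for the root 0, i for the nodes of
  a subtree of a child of the root with i \<le> j nodes, and j+1 for all other nodes and the
  immigrant roots. A subtree with i nodes contains i - 1 edges, so its total attachment weight is
  i \<alpha> + (i - 1) = i (\<alpha> + 1) - 1; hence the weight of colour i is (i (\<alpha> + 1) - 1) B_i, the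
  weight of colour 0 is deg 0 + l, and colour j+1 carries the rest of the normalising constant
  C_N. Attaching the new node to a parent of colour i turns one subtree with i nodes into one
  with i + 1 nodes, a root attachment creates a subtree with one node, and these are exactly the
  urn's replacement rules. So the map from trees to these colour weights sends the tree chain onto
  the urn chain (a lumping of Markov chains), and the trajectories have the same law.\<close>

section \<open>Lumping of Markov chains\<close>

lemma traj_law_last_invariant:
  assumes "P s0" and "\<And>s t. P s \<Longrightarrow> t \<in> set_pmf (K s) \<Longrightarrow> P t"
  shows "xs \<in> set_pmf (traj_law K s0 n) \<Longrightarrow> xs \<noteq> [] \<and> P (last xs)"
proof (induction n arbitrary: xs)
  case 0
  then show ?case using assms(1) by simp
next
  case (Suc n)
  then show ?case using assms(2) by fastforce
qed

lemma map_traj_law_lumping: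
  assumes "P s0"
    and "\<And>s t. P s \<Longrightarrow> t \<in> set_pmf (K s) \<Longrightarrow> P t"
    and "\<And>s. P s \<Longrightarrow> map_pmf f (K s) = K' (f s)"
  shows "map_pmf (map f) (traj_law K s0 n) = traj_law K' (f s0) n"
proof (induction n)
  case 0
  show ?case by simp
next
  case (Suc n)
  have "map_pmf (map f) (traj_law K s0 (Suc n)) =
     bind_pmf (traj_law K s0 n) (\<lambda>xs. map_pmf (\<lambda>u. map f xs @ [u]) (map_pmf f (K (last xs))))"
    by (simp add: map_bind_pmf pmf.map_comp o_def)
  also have "\<dots> = bind_pmf (traj_law K s0 n) (\<lambda>xs. map_pmf (\<lambda>u. map f xs @ [u]) (K' (last (map f xs))))"
    using traj_law_last_invariant[of P, OF assms(1,2)] assms(3)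
    by (intro bind_pmf_cong refl) (auto simp: last_map)
  also have "\<dots> = traj_law K' (f s0) (Suc n)"
    by (simp add: Suc.IH[symmetric] bind_map_pmf)
  finally show ?case .
qed

lemma pmf_of_list_wf_distinctI:
  assumes "distinct xs" and "\<And>x. x \<in> set xs \<Longrightarrow> w x \<ge> 0" and "(\<Sum>x\<in>set xs. w x) = 1"
  shows "pmf_of_list_wf (map (\<lambda>x. (x, w x)) xs)"
  using assms by (intro pmf_of_list_wfI) (auto simp: o_def sum_list_distinct_conv_sum_set)

lemma pmf_map_pmf_of_list_distinct:
  assumes "distinct xs" and "pmf_of_list_wf (map (\<lambda>x. (x, w x)) xs)"
  shows "pmf (map_pmf g (pmf_of_list (map (\<lambda>x. (x, w x)) xs))) y = (\<Sum>x\<in>{x\<in>set xs. g x = y}. w x)"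
proof -
  have "pmf (map_pmf g (pmf_of_list (map (\<lambda>x. (x, w x)) xs))) y
      = measure (pmf_of_list (map (\<lambda>x. (x, w x)) xs)) (g -` {y})"
    by (simp add: pmf_map)
  also have "\<dots> = sum_list (map w (filter (\<lambda>x. g x = y) xs))"
    using assms(2) by (simp add: measure_pmf_of_list filter_map o_def)
  also have "\<dots> = (\<Sum>x\<in>{x\<in>set xs. g x = y}. w x)"
    using assms(1) by (simp add: sum_list_distinct_conv_sum_set)
  finally show ?thesis .
qed

lemma map_pmf_of_list_distinct:
  assumes "distinct xs" and "distinct ys" and "pmf_of_list_wf (map (\<lambda>x. (x, w x)) xs)"
    and "g ` set xs \<subseteq> set ys"
  shows "map_pmf g (pmf_of_list (map (\<lambda>x. (x, w x)) xs))
       = pmf_of_list (map (\<lambda>y. (y, \<Sum>x\<in>{x\<in>set xs. g x = y}. w x)) ys)"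
proof -
  let ?W = "\<lambda>y. \<Sum>x\<in>{x\<in>set xs. g x = y}. w x"
  have w_nonneg: "w x \<ge> 0" if "x \<in> set xs" for x
    using assms(3) that by (auto simp: pmf_of_list_wf_def)
  have "(\<Sum>x\<in>set xs. w x) = 1"
    using assms(1,3) by (simp add: pmf_of_list_wf_def o_def sum_list_distinct_conv_sum_set)
  then have "(\<Sum>y\<in>set ys. ?W y) = 1"
    using assms(4) by (simp add: sum.group)
  then have wf: "pmf_of_list_wf (map (\<lambda>y. (y, ?W y)) ys)"
    using assms(2) w_nonneg by (intro pmf_of_list_wf_distinctI sum_nonneg) auto
  show ?thesis
  proof (rule pmf_eqI)
    fix y
    have "pmf (pmf_of_list (map (\<lambda>y. (y, ?W y)) ys)) y = (\<Sum>y'\<in>{y'\<in>set ys. y' = y}. ?W y')"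
      using pmf_map_pmf_of_list_distinct[OF assms(2) wf, of id] by simp
    also have "\<dots> = ?W y"
    proof (cases "y \<in> set ys")
      case True
      then have "{y'\<in>set ys. y' = y} = {y}" by auto
      then show ?thesis by simp
    next
      case False
      then have "{x\<in>set xs. g x = y} = {}" "{y'\<in>set ys. y' = y} = {}" using assms(4) by auto
      then show ?thesis by (simp only: sum.empty)
    qed
    finally show "pmf (map_pmf g (pmf_of_list (map (\<lambda>x. (x, w x)) xs))) y
        = pmf (pmf_of_list (map (\<lambda>y. (y, ?W y)) ys)) y"
      using pmf_map_pmf_of_list_distinct[OF assms(1,3)] by simp
  qed
qed

definition valid_tree :: "nat \<Rightarrow> tree \<Rightarrow> bool" where
  "valid_tree p par \<longleftrightarrow> (\<forall>k\<in>{1..length par}. case par ! (k - 1) of Root0 \<Rightarrow> True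
      | Imm i \<Rightarrow> 1 \<le> i \<and> i \<le> (k - 1) div p | Ord k' \<Rightarrow> 1 \<le> k' \<and> k' < k)"

definition candidates :: "nat \<Rightarrow> nat \<Rightarrow> node list" where
  "candidates p N = Root0 # map Imm [1..<N div p + 1] @ map Ord [1..<N + 1]"

lemma set_candidates: "set (candidates p N) = {Root0} \<union> Imm ` {1..N div p} \<union> Ord ` {1..N}"
  by (auto simp: candidates_def)

lemma distinct_candidates: "distinct (candidates p N)"
  by (auto simp: candidates_def distinct_map inj_on_def)

lemma valid_tree_append:
  assumes "valid_tree p par" and "v \<in> set (candidates p (length par))"
  shows "valid_tree p (par @ [v])"
  unfolding valid_tree_def
proof
  fix k assume k: "k \<in> {1..length (par @ [v])}"
  show "case (par @ [v]) ! (k - 1) of Root0 \<Rightarrow> True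
      | Imm i \<Rightarrow> 1 \<le> i \<and> i \<le> (k - 1) div p | Ord k' \<Rightarrow> 1 \<le> k' \<and> k' < k"
  proof (cases "k \<le> length par")
    case True
    then have "k - 1 < length par" using k by auto
    then have "(par @ [v]) ! (k - 1) = par ! (k - 1)" by (simp add: nth_append)
    then show ?thesis using assms(1) True k unfolding valid_tree_def by auto
  next
    case False
    then have "k = Suc (length par)" using k by auto
    then show ?thesis using assms(2) unfolding set_candidates by (auto simp: nth_append)
  qed
qed

lemma parent_in_candidates:
  assumes "valid_tree p par" and "k \<in> {1..length par}"
  shows "par ! (k - 1) \<in> set (candidates p (length par))"
proof -
  have "(k - 1) div p \<le> length par div p" by (intro div_le_mono) (use assms(2) in auto)
  then show ?thesis
  proof (cases "par ! (k - 1)")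
    case (Imm i)
    then show ?thesis
      using assms \<open>(k - 1) div p \<le> length par div p\<close> unfolding valid_tree_def set_candidates
      by force
  next
    case (Ord i)
    then show ?thesis using assms unfolding valid_tree_def set_candidates by force
  qed (simp add: candidates_def)
qed

lemma outdeg_append: "outdeg (par @ [v]) u = outdeg par u + (if v = u then 1 else 0)"
proof -
  have "{k \<in> {1..length (par @ [v])}. (par @ [v]) ! (k - 1) = u}
      = {k \<in> {1..length par}. par ! (k - 1) = u} \<union> (if v = u then {Suc (length par)} else {})"
    by (auto simp: nth_append le_Suc_eq)
  then show ?thesis unfolding outdeg_def by (simp add: card_insert_if)
qed

lemma sum_outdeg_candidates:
  assumes "valid_tree p par"
  shows "(\<Sum>v\<in>set (candidates p (length par)). outdeg par v) = real (length par)"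
proof -
  have "(\<Sum>v\<in>set (candidates p (length par)). \<Sum>k\<in>{k \<in> {1..length par}. par ! (k - 1) = v}. 1)
      = (\<Sum>k\<in>{1..length par}. 1 :: real)"
    using parent_in_candidates[OF assms] by (intro sum.group) auto
  then show ?thesis unfolding outdeg_def by simp
qed

definition subtree :: "tree \<Rightarrow> nat \<Rightarrow> nat set" where
  "subtree par c = {k \<in> {1..length par}. (k, c) \<in> (parent_rel par)\<^sup>*}"

definition root_children :: "tree \<Rightarrow> nat set" where
  "root_children par = {c \<in> {1..length par}. par ! (c - 1) = Root0}"

lemma subtree_size_eq_card: "subtree_size par c = card (subtree par c)"
  by (simp add: subtree_size_def subtree_def)

lemma finite_subtree [simp]: "finite (subtree par c)"
  by (simp add: subtree_def)

lemma finite_root_children [simp]: "finite (root_children par)"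
  by (simp add: root_children_def)

lemma B_eq_card_root_children: "B par m = card {c \<in> root_children par. subtree_size par c = m}"
  unfolding B_def root_children_def by (intro arg_cong[where f=card]) auto

lemma parent_rel_bounds:
  assumes "valid_tree p par" and "(a, b) \<in> parent_rel par"
  shows "1 \<le> a \<and> a \<le> length par \<and> 1 \<le> b \<and> b < a"
proof -
  have a: "a \<in> {1..length par}" "par ! (a - 1) = Ord b"
    using assms(2) by (auto simp: parent_rel_def)
  have "case par ! (a - 1) of Root0 \<Rightarrow> True
      | Imm i \<Rightarrow> 1 \<le> i \<and> i \<le> (a - 1) div p | Ord k' \<Rightarrow> 1 \<le> k' \<and> k' < a"
    using assms(1) a(1) unfolding valid_tree_def by (rule bspec)
  then show ?thesis using a by simp
qed

lemma single_valued_parent_rel: "single_valued (parent_rel par)"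
  unfolding single_valued_def parent_rel_def by auto

lemma parent_rel_rtrancl_le:
  assumes "valid_tree p par" and "(a, b) \<in> (parent_rel par)\<^sup>*"
  shows "b \<le> a"
  using assms(2)
proof (induction rule: rtrancl_induct)
  case (step y z)
  then show ?case using parent_rel_bounds[OF assms(1) step(2)] by simp
qed simp

lemma parent_rel_rtrancl_beyond:
  assumes "valid_tree p par" and "(a, b) \<in> (parent_rel par)\<^sup>*" and "a > length par"
  shows "b = a"
  using assms(2)
proof (rule converse_rtranclE)
  fix y assume "(a, y) \<in> parent_rel par"
  then show "b = a" using parent_rel_bounds[OF assms(1)] assms(3) by fastforce
qed simp

lemma root_child_rtrancl_eq:
  assumes "c \<in> root_children par" and "(c, y) \<in> (parent_rel par)\<^sup>*"
  shows "y = c"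
  using assms(2)
proof (rule converse_rtranclE)
  fix z assume "(c, z) \<in> parent_rel par"
  then show "y = c" using assms(1) by (simp add: root_children_def parent_rel_def)
qed simp

lemma root_child_unique:
  assumes "c1 \<in> root_children par" and "c2 \<in> root_children par"
    and "(k, c1) \<in> (parent_rel par)\<^sup>*" and "(k, c2) \<in> (parent_rel par)\<^sup>*"
  shows "c1 = c2"
  using single_valued_confluent[OF single_valued_parent_rel assms(3,4)]
    root_child_rtrancl_eq[OF assms(1)] root_child_rtrancl_eq[OF assms(2)] by auto

lemma root_child_in_subtree: "c \<in> root_children par \<Longrightarrow> c \<in> subtree par c"
  by (auto simp: root_children_def subtree_def)

lemma subtree_size_pos: "c \<in> root_children par \<Longrightarrow> subtree_size par c \<ge> 1"
  unfolding subtree_size_eq_card using root_child_in_subtree[of c par]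
  by (metis One_nat_def card_0_eq empty_iff finite_subtree less_one not_less)

lemma sum_outdeg_subtree:
  assumes "valid_tree p par" and "c \<in> root_children par"
  shows "(\<Sum>k\<in>subtree par c. outdeg par (Ord k)) = real (card (subtree par c)) - 1"
proof -
  let ?R = "parent_rel par"
  let ?kids = "\<lambda>k. {k' \<in> {1..length par}. par ! (k' - 1) = Ord k}"
  have kids: "(\<Union>k\<in>subtree par c. ?kids k) = subtree par c - {c}"
  proof (intro equalityI subsetI)
    fix x assume "x \<in> (\<Union>k\<in>subtree par c. ?kids k)"
    then obtain k where k: "k \<in> subtree par c" "x \<in> {1..length par}" "par ! (x - 1) = Ord k"
      by auto
    then have "(x, k) \<in> ?R" by (auto simp: parent_rel_def)
    moreover have "(k, c) \<in> ?R\<^sup>*" using k by (auto simp: subtree_def)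
    ultimately have "(x, c) \<in> ?R\<^sup>*" by (rule converse_rtrancl_into_rtrancl)
    moreover have "x \<noteq> c" using k assms(2) by (auto simp: root_children_def)
    ultimately show "x \<in> subtree par c - {c}" using k by (auto simp: subtree_def)
  next
    fix x assume x: "x \<in> subtree par c - {c}"
    then have "(x, c) \<in> ?R\<^sup>*" "x \<noteq> c" "x \<in> {1..length par}" by (auto simp: subtree_def)
    then obtain y where y: "(x, y) \<in> ?R" "(y, c) \<in> ?R\<^sup>*"
      by (metis converse_rtranclE)
    have "y \<in> {1..length par}" using parent_rel_bounds[OF assms(1) y(1)] by auto
    then have "y \<in> subtree par c" using y by (auto simp: subtree_def)
    moreover have "par ! (x - 1) = Ord y" using y(1) by (auto simp: parent_rel_def)
    ultimately show "x \<in> (\<Union>k\<in>subtree par c. ?kids k)"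
      using \<open>x \<in> {1..length par}\<close> by auto
  qed
  have "(\<Sum>k\<in>subtree par c. card (?kids k)) = card (\<Union>k\<in>subtree par c. ?kids k)"
    by (subst card_UN_disjoint) auto
  also have "\<dots> = card (subtree par c) - 1"
    using kids root_child_in_subtree[OF assms(2)] by simp
  finally have "(\<Sum>k\<in>subtree par c. outdeg par (Ord k)) = real (card (subtree par c) - 1)"
    by (simp add: outdeg_def flip: of_nat_sum)
  then show ?thesis
    using subtree_size_pos[OF assms(2)] by (simp add: subtree_size_eq_card)
qed

section \<open>Colour classes and their weights\<close>

definition colour :: "nat \<Rightarrow> tree \<Rightarrow> node \<Rightarrow> nat" where
  "colour j par v = (case v of Root0 \<Rightarrow> 0 | Imm _ \<Rightarrow> Suc j
     | Ord k \<Rightarrow> (if \<exists>c\<in>root_children par. (k, c) \<in> (parent_rel par)\<^sup>* \<and> subtree_size par c \<le> j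
                 then subtree_size par (THE c. c \<in> root_children par \<and> (k, c) \<in> (parent_rel par)\<^sup>*)
                 else Suc j))"

lemma colour_Ord_below:
  assumes "c \<in> root_children par" and "(k, c) \<in> (parent_rel par)\<^sup>*"
  shows "colour j par (Ord k) = (if subtree_size par c \<le> j then subtree_size par c else Suc j)"
proof (cases "subtree_size par c \<le> j")
  case True
  have "(THE c. c \<in> root_children par \<and> (k, c) \<in> (parent_rel par)\<^sup>*) = c"
    using assms by (intro the_equality) (auto intro: root_child_unique)
  then show ?thesis using True assms by (auto simp: colour_def)
next
  case False
  then have "\<not> (\<exists>c'\<in>root_children par. (k, c') \<in> (parent_rel par)\<^sup>* \<and> subtree_size par c' \<le> j)"
    using assms root_child_unique by blast
  then show ?thesis using False by (auto simp: colour_def)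
qed

lemma colour_Ord_not_below:
  "\<not> (\<exists>c\<in>root_children par. (k, c) \<in> (parent_rel par)\<^sup>*) \<Longrightarrow> colour j par (Ord k) = Suc j"
  by (auto simp: colour_def)

lemma colour_le: "colour j par v \<le> Suc j"
proof (cases v)
  case (Ord k)
  then show ?thesis
    by (cases "\<exists>c\<in>root_children par. (k, c) \<in> (parent_rel par)\<^sup>*")
      (auto simp: colour_Ord_below colour_Ord_not_below)
qed (auto simp: colour_def)

lemma colour_eq_0_iff: "colour j par v = 0 \<longleftrightarrow> v = Root0"
proof (cases v)
  case (Ord k)
  have "colour j par (Ord k) \<ge> 1"
  proof (cases "\<exists>c\<in>root_children par. (k, c) \<in> (parent_rel par)\<^sup>*")
    case True
    then obtain c where c: "c \<in> root_children par" "(k, c) \<in> (parent_rel par)\<^sup>*" by blast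
    show ?thesis using colour_Ord_below[OF c, of j] subtree_size_pos[OF c(1)] by simp
  qed (simp add: colour_Ord_not_below)
  then show ?thesis using Ord by simp
qed (auto simp: colour_def)

lemma colour_class_eq:
  assumes "1 \<le> i" and "i \<le> j"
  shows "{v \<in> set (candidates p (length par)). colour j par v = i}
       = Ord ` (\<Union>c\<in>{c \<in> root_children par. subtree_size par c = i}. subtree par c)"
proof (intro equalityI subsetI)
  fix v assume v: "v \<in> {v \<in> set (candidates p (length par)). colour j par v = i}"
  then obtain k where k: "v = Ord k" "k \<in> {1..length par}"
    using assms unfolding set_candidates by (auto simp: colour_def)
  have ci: "colour j par (Ord k) = i" using v k by simp
  then obtain c where c: "c \<in> root_children par" "(k, c) \<in> (parent_rel par)\<^sup>*"
    using colour_Ord_not_below[of par k j] assms by fastforce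
  then have "subtree_size par c = i"
    using ci assms colour_Ord_below[OF c, of j] by (auto split: if_splits)
  moreover have "k \<in> subtree par c" using k c by (auto simp: subtree_def)
  ultimately show "v \<in> Ord ` (\<Union>c\<in>{c \<in> root_children par. subtree_size par c = i}. subtree par c)"
    using c k by blast
next
  fix v assume "v \<in> Ord ` (\<Union>c\<in>{c \<in> root_children par. subtree_size par c = i}. subtree par c)"
  then obtain c k where ck: "v = Ord k" "c \<in> root_children par" "subtree_size par c = i"
      "k \<in> subtree par c"
    by blast
  then have "(k, c) \<in> (parent_rel par)\<^sup>*" "k \<in> {1..length par}" by (auto simp: subtree_def)
  then show "v \<in> {v \<in> set (candidates p (length par)). colour j par v = i}"
    using ck assms colour_Ord_below[OF ck(2), of k j] unfolding set_candidates by auto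
qed

definition attach_weight :: "real \<Rightarrow> real \<Rightarrow> tree \<Rightarrow> node \<Rightarrow> real" where
  "attach_weight \<alpha> l par v = outdeg par v + (case v of Ord _ \<Rightarrow> \<alpha> | _ \<Rightarrow> l)"

definition total_weight :: "real \<Rightarrow> real \<Rightarrow> nat \<Rightarrow> nat \<Rightarrow> real" where
  "total_weight \<alpha> l p N = (1 + \<alpha>) * real N + (real (N div p) + 1) * l"

text \<open>Colour j+1 gets whatever remains of the total weight after colours 0 to j.\<close>
definition urn_of_tree :: "real \<Rightarrow> real \<Rightarrow> nat \<Rightarrow> nat \<Rightarrow> tree \<Rightarrow> nat \<Rightarrow> real" where
  "urn_of_tree \<alpha> l p j par i = (if i = 0 then outdeg par Root0 + l
     else if i \<le> j then (real i * (\<alpha> + 1) - 1) * real (B par i)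
     else if i = Suc j then total_weight \<alpha> l p (length par) - (outdeg par Root0 + l)
        - (\<Sum>m=1..j. (real m * (\<alpha> + 1) - 1) * real (B par m))
     else 0)"

lemma tree_step_eq:
  "tree_step \<alpha> l p par = map_pmf (\<lambda>v. par @ [v])
     (pmf_of_list (map (\<lambda>v. (v, attach_weight \<alpha> l par v / total_weight \<alpha> l p (length par)))
       (candidates p (length par))))"
  unfolding tree_step_def Let_def total_weight_def[symmetric] candidates_def[symmetric]
  by (intro arg_cong[where f="map_pmf (\<lambda>v. par @ [v])"] arg_cong[where f=pmf_of_list] map_cong refl)
     (auto simp: attach_weight_def split: node.splits)

lemma attach_weight_nonneg: "\<alpha> > 0 \<Longrightarrow> l > 0 \<Longrightarrow> attach_weight \<alpha> l par v \<ge> 0"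
  by (cases v) (auto simp: attach_weight_def outdeg_def)

lemma total_weight_pos: "\<alpha> > 0 \<Longrightarrow> l > 0 \<Longrightarrow> total_weight \<alpha> l p N > 0"
  unfolding total_weight_def by (intro add_nonneg_pos mult_nonneg_nonneg mult_pos_pos) auto

lemma total_weight_Suc:
  "total_weight \<alpha> l p (Suc N) = total_weight \<alpha> l p N + (1 + \<alpha>) + (if p dvd Suc N then l else 0)"
  unfolding total_weight_def by (simp add: div_Suc dvd_eq_mod_eq_0 algebra_simps)

lemma sum_attach_weight:
  assumes "valid_tree p par"
  shows "(\<Sum>v\<in>set (candidates p (length par)). attach_weight \<alpha> l par v)
       = total_weight \<alpha> l p (length par)"
proof -
  have "(\<Sum>v\<in>set (candidates p (length par)). (case v of Ord _ \<Rightarrow> \<alpha> | _ \<Rightarrow> l))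
      = sum_list (map (\<lambda>v. case v of Ord _ \<Rightarrow> \<alpha> | _ \<Rightarrow> l) (candidates p (length par)))"
    by (simp add: sum_list_distinct_conv_sum_set distinct_candidates)
  also have "\<dots> = l + real (length par div p) * l + real (length par) * \<alpha>"
    by (simp add: candidates_def o_def sum_list_triv del: upt_Suc)
  finally show ?thesis
    using sum_outdeg_candidates[OF assms]
    by (simp add: attach_weight_def sum.distrib total_weight_def algebra_simps)
qed

lemma sum_urn_of_tree:
  "(\<Sum>i\<in>{0..Suc j}. urn_of_tree \<alpha> l p j par i) = total_weight \<alpha> l p (length par)"
proof -
  have "{0..Suc j} = insert (Suc j) (insert 0 {1..j})" by auto
  moreover have "(\<Sum>i\<in>{1..j}. urn_of_tree \<alpha> l p j par i)
      = (\<Sum>m=1..j. (real m * (\<alpha> + 1) - 1) * real (B par m))"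
    by (rule sum.cong) (auto simp: urn_of_tree_def)
  ultimately show ?thesis by (simp add: urn_of_tree_def)
qed

lemma colour_weight_small:
  assumes "valid_tree p par" and "1 \<le> i" and "i \<le> j"
  shows "(\<Sum>v\<in>{v \<in> set (candidates p (length par)). colour j par v = i}. attach_weight \<alpha> l par v)
       = urn_of_tree \<alpha> l p j par i"
proof -
  let ?RC = "{c \<in> root_children par. subtree_size par c = i}"
  have "(\<Sum>v\<in>{v \<in> set (candidates p (length par)). colour j par v = i}. attach_weight \<alpha> l par v)
      = (\<Sum>k\<in>(\<Union>c\<in>?RC. subtree par c). outdeg par (Ord k) + \<alpha>)"
    unfolding colour_class_eq[OF assms(2,3)]
    by (subst sum.reindex) (auto simp: inj_on_def attach_weight_def)
  also have "\<dots> = (\<Sum>c\<in>?RC. \<Sum>k\<in>subtree par c. outdeg par (Ord k) + \<alpha>)"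
    by (rule sum.UNION_disjoint) (auto simp: subtree_def dest: root_child_unique)
  also have "\<dots> = (\<Sum>c\<in>?RC. real i * (\<alpha> + 1) - 1)"
    using sum_outdeg_subtree[OF assms(1)]
    by (intro sum.cong refl) (simp add: sum.distrib subtree_size_eq_card algebra_simps)
  also have "\<dots> = urn_of_tree \<alpha> l p j par i"
    using assms(2,3) by (simp add: B_eq_card_root_children urn_of_tree_def)
  finally show ?thesis .
qed

lemma colour_weight:
  assumes "valid_tree p par" and "i \<le> Suc j"
  shows "(\<Sum>v\<in>{v \<in> set (candidates p (length par)). colour j par v = i}. attach_weight \<alpha> l par v)
       = urn_of_tree \<alpha> l p j par i"
proof -
  let ?F = "\<lambda>i. \<Sum>v\<in>{v \<in> set (candidates p (length par)). colour j par v = i}. attach_weight \<alpha> l par v"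
  have F0: "?F 0 = urn_of_tree \<alpha> l p j par 0"
  proof -
    have "{v \<in> set (candidates p (length par)). colour j par v = 0} = {Root0}"
      by (auto simp: colour_eq_0_iff set_candidates)
    then show ?thesis by (simp add: urn_of_tree_def attach_weight_def)
  qed
  have "(\<Sum>i\<in>{0..Suc j}. ?F i) = total_weight \<alpha> l p (length par)"
    using sum_attach_weight[OF assms(1)] by (subst sum.group) (auto simp: colour_le)
  also have "\<dots> = (\<Sum>i\<in>{0..Suc j}. urn_of_tree \<alpha> l p j par i)"
    by (rule sum_urn_of_tree[symmetric])
  finally have "(\<Sum>i\<in>insert (Suc j) (insert 0 {1..j}). ?F i)
      = (\<Sum>i\<in>insert (Suc j) (insert 0 {1..j}). urn_of_tree \<alpha> l p j par i)"
    by (simp add: atLeast0_atMost_Suc atLeastAtMost_insertL)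
  then have "?F (Suc j) = urn_of_tree \<alpha> l p j par (Suc j)"
    using F0 colour_weight_small[OF assms(1)] by simp
  then show ?thesis
    using assms(2) F0 colour_weight_small[OF assms(1)] by (cases "i = 0"; cases "i = Suc j") auto
qed

section \<open>Inserting a node\<close>

lemma rtrancl_parent_rel_append:
  assumes "valid_tree p par"
  shows "(parent_rel (par @ [v]))\<^sup>* = (parent_rel par)\<^sup>* \<union>
           {(Suc (length par), y) | y. \<exists>k. v = Ord k \<and> (k, y) \<in> (parent_rel par)\<^sup>*}"
proof -
  have new_edge: "parent_rel (par @ [v]) = parent_rel par \<union> {(Suc (length par), k) | k. v = Ord k}"
    unfolding parent_rel_def by (auto simp: nth_append le_Suc_eq split: if_splits)
  show ?thesis
  proof (cases "\<exists>k. v = Ord k")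
    case True
    then obtain k where k: "v = Ord k" by blast
    have into_new: "(x, Suc (length par)) \<in> (parent_rel par)\<^sup>* \<longleftrightarrow> x = Suc (length par)" for x
      using parent_rel_rtrancl_le[OF assms] parent_rel_rtrancl_beyond[OF assms] by fastforce
    have "parent_rel (par @ [v]) = insert (Suc (length par), k) (parent_rel par)"
      using new_edge k by auto
    then show ?thesis using into_new k by (auto simp: rtrancl_insert)
  next
    case False
    then show ?thesis unfolding new_edge by auto
  qed
qed

definition in_subtree :: "tree \<Rightarrow> node \<Rightarrow> nat \<Rightarrow> bool" where
  "in_subtree par v c \<longleftrightarrow> (\<exists>k. v = Ord k \<and> (k, c) \<in> (parent_rel par)\<^sup>*)"

lemma root_children_append:
  "root_children (par @ [v]) = root_children par \<union> (if v = Root0 then {Suc (length par)} else {})"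
  unfolding root_children_def by (auto simp: nth_append le_Suc_eq)

lemma subtree_size_append:
  assumes "valid_tree p par" and "c \<in> root_children par"
  shows "subtree_size (par @ [v]) c = subtree_size par c + (if in_subtree par v c then 1 else 0)"
proof -
  have c: "c \<in> {1..length par}" using assms(2) by (simp add: root_children_def)
  have "(Suc (length par), c) \<notin> (parent_rel par)\<^sup>*"
    using parent_rel_rtrancl_beyond[OF assms(1), of "Suc (length par)" c] c by auto
  then have "subtree (par @ [v]) c
      = subtree par c \<union> (if in_subtree par v c then {Suc (length par)} else {})"
    unfolding subtree_def rtrancl_parent_rel_append[OF assms(1)] in_subtree_def
    by (auto simp: le_Suc_eq)
  moreover have "Suc (length par) \<notin> subtree par c" by (auto simp: subtree_def)
  ultimately show ?thesis unfolding subtree_size_eq_card by simp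
qed

lemma subtree_size_append_new:
  assumes "valid_tree p par"
  shows "subtree_size (par @ [v]) (Suc (length par)) = 1"
proof -
  have "subtree (par @ [v]) (Suc (length par)) = {Suc (length par)}"
    unfolding subtree_def rtrancl_parent_rel_append[OF assms]
    by (auto dest: parent_rel_rtrancl_le[OF assms])
  then show ?thesis unfolding subtree_size_eq_card by simp
qed

lemma card_level_set_shift:
  fixes f f' :: "'a \<Rightarrow> nat"
  assumes "finite A" and "c0 \<in> A"
    and "\<And>c. c \<in> A \<Longrightarrow> c \<noteq> c0 \<Longrightarrow> f' c = f c" and "f' c0 = Suc (f c0)"
  shows "real (card {c \<in> A. f' c = m}) = real (card {c \<in> A. f c = m})
           - (if f c0 = m then 1 else 0) + (if Suc (f c0) = m then 1 else 0)"
proof -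
  have card: "card {c \<in> A. g c = m} = card {c \<in> A - {c0}. g c = m} + (if g c0 = m then 1 else 0)"
    for g :: "'a \<Rightarrow> nat"
  proof -
    have "{c \<in> A. g c = m} = {c \<in> A - {c0}. g c = m} \<union> (if g c0 = m then {c0} else {})"
      using assms(2) by auto
    then show ?thesis using assms(1) by (auto simp: card_insert_if)
  qed
  have "{c \<in> A - {c0}. f' c = m} = {c \<in> A - {c0}. f c = m}" using assms(3) by auto
  then show ?thesis using card[of f'] card[of f] assms(4) by auto
qed

lemma B_append_Root0:
  assumes "valid_tree p par"
  shows "real (B (par @ [Root0]) i) = real (B par i) + (if i = 1 then 1 else 0)"
proof -
  let ?N = "Suc (length par)"
  have "?N \<notin> root_children par" by (auto simp: root_children_def)
  moreover have "{c \<in> root_children (par @ [Root0]). subtree_size (par @ [Root0]) c = i}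
      = {c \<in> root_children par. subtree_size par c = i} \<union> (if i = 1 then {?N} else {})"
    unfolding root_children_append
    using subtree_size_append[OF assms, of _ Root0] subtree_size_append_new[OF assms, of Root0]
    by (auto simp: in_subtree_def)
  ultimately show ?thesis unfolding B_eq_card_root_children by (auto simp: card_insert_if)
qed

lemma B_append_outside:
  assumes "valid_tree p par" and "v \<noteq> Root0" and "\<not> (\<exists>c\<in>root_children par. in_subtree par v c)"
  shows "B (par @ [v]) i = B par i"
proof -
  have "{c \<in> root_children (par @ [v]). subtree_size (par @ [v]) c = i}
      = {c \<in> root_children par. subtree_size par c = i}"
    unfolding root_children_append using subtree_size_append[OF assms(1)] assms(2,3) by auto
  then show ?thesis unfolding B_eq_card_root_children by simp
qed

lemma B_append_in_subtree:
  assumes "valid_tree p par" and "c0 \<in> root_children par" and "in_subtree par v c0"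
  shows "real (B (par @ [v]) i) = real (B par i) - (if subtree_size par c0 = i then 1 else 0)
            + (if Suc (subtree_size par c0) = i then 1 else 0)"
proof -
  obtain k where k: "v = Ord k" "(k, c0) \<in> (parent_rel par)\<^sup>*"
    using assms(3) by (auto simp: in_subtree_def)
  have other: "subtree_size (par @ [v]) c = subtree_size par c"
    if "c \<in> root_children par" "c \<noteq> c0" for c
  proof -
    have "\<not> in_subtree par v c"
      using that root_child_unique[OF assms(2) that(1) k(2)] k by (auto simp: in_subtree_def)
    then show ?thesis using subtree_size_append[OF assms(1) that(1)] by simp
  qed
  have "subtree_size (par @ [v]) c0 = Suc (subtree_size par c0)"
    using subtree_size_append[OF assms(1,2)] assms(3) by simp
  moreover have "root_children (par @ [v]) = root_children par"
    unfolding root_children_append using k by simp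
  ultimately show ?thesis unfolding B_eq_card_root_children
    using card_level_set_shift[OF finite_root_children assms(2) other] by simp
qed

definition urn_increment :: "real \<Rightarrow> nat \<Rightarrow> nat \<Rightarrow> nat \<Rightarrow> real" where
  "urn_increment \<alpha> j c i = (if c = 0 then (if i = 0 then 1 else 0) + (if i = 1 then \<alpha> else 0)
     else if c \<le> j then (if i = Suc c then real (Suc c) * (\<alpha> + 1) - 1 else 0)
                        - (if i = c then real c * (\<alpha> + 1) - 1 else 0)
     else (if i = Suc j then 1 + \<alpha> else 0))"

lemma urn_update_eq_increment:
  assumes "c \<le> Suc j" and "1 \<le> j"
  shows "urn_update \<alpha> l p j N Z c i
       = Z i + urn_increment \<alpha> j c i + (if i = Suc j \<and> p dvd Suc N then l else 0)"
  using assms unfolding urn_update_def urn_increment_def Let_def by (auto simp: algebra_simps)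

lemma sum_urn_increment:
  assumes "c \<le> Suc j" and "1 \<le> j"
  shows "(\<Sum>i\<in>{0..Suc j}. urn_increment \<alpha> j c i) = 1 + \<alpha>"
proof -
  consider "c = 0" | "1 \<le> c" "c \<le> j" | "c = Suc j" using assms by linarith
  then show ?thesis
    by cases (use assms in \<open>auto simp: urn_increment_def sum.distrib sum_subtractf algebra_simps\<close>)
qed

lemma urn_of_tree_eqI:
  assumes "\<And>i. i \<le> j \<Longrightarrow> urn_of_tree \<alpha> l p j par i = Z i"
    and "(\<Sum>i\<in>{0..Suc j}. Z i) = total_weight \<alpha> l p (length par)"
    and "\<And>i. i > Suc j \<Longrightarrow> Z i = 0"
  shows "urn_of_tree \<alpha> l p j par = Z"
proof
  fix i
  have "Z (Suc j) + (\<Sum>i\<in>{0..j}. Z i)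
      = urn_of_tree \<alpha> l p j par (Suc j) + (\<Sum>i\<in>{0..j}. urn_of_tree \<alpha> l p j par i)"
    using assms(2) sum_urn_of_tree[of \<alpha> l p j par] by simp
  moreover have "(\<Sum>i\<in>{0..j}. Z i) = (\<Sum>i\<in>{0..j}. urn_of_tree \<alpha> l p j par i)"
    using assms(1) by simp
  ultimately have "Z (Suc j) = urn_of_tree \<alpha> l p j par (Suc j)" by simp
  then show "urn_of_tree \<alpha> l p j par i = Z i"
    using assms(1,3)[of i] by (cases "i \<le> j"; cases "i = Suc j") (auto simp: urn_of_tree_def)
qed

lemma urn_of_tree_append_small:
  assumes "valid_tree p par" and "i \<le> j"
  shows "urn_of_tree \<alpha> l p j (par @ [v]) i = urn_of_tree \<alpha> l p j par i + urn_increment \<alpha> j (colour j par v) i"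
proof (cases "i = 0")
  case True
  then show ?thesis
    using colour_le[of j par v] colour_eq_0_iff[of j par v]
    by (auto simp: urn_of_tree_def urn_increment_def outdeg_append)
next
  case False
  then have i: "1 \<le> i" "i \<le> j" using assms(2) by auto
  then have Z_i: "urn_of_tree \<alpha> l p j q i = (real i * (\<alpha> + 1) - 1) * real (B q i)" for q
    by (simp add: urn_of_tree_def)
  consider "v = Root0"
    | c0 where "c0 \<in> root_children par" "in_subtree par v c0"
    | "v \<noteq> Root0" "\<not> (\<exists>c\<in>root_children par. in_subtree par v c)"
    by blast
  then show ?thesis
  proof cases
    case 1
    then show ?thesis unfolding Z_i
      using B_append_Root0[OF assms(1), of i] i by (auto simp: colour_def urn_increment_def algebra_simps)
  next
    case 2
    then obtain k where k: "v = Ord k" "(k, c0) \<in> (parent_rel par)\<^sup>*"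
      by (auto simp: in_subtree_def)
    have colour_v: "colour j par v = (if subtree_size par c0 \<le> j then subtree_size par c0 else Suc j)"
      using colour_Ord_below[OF 2(1) k(2)] k(1) by simp
    show ?thesis unfolding Z_i colour_v B_append_in_subtree[OF assms(1) 2]
      using subtree_size_pos[OF 2(1)] i by (auto simp: urn_increment_def algebra_simps)
  next
    case 3
    then have "colour j par v = Suc j"
      by (cases v) (auto simp: colour_def in_subtree_def)
    then show ?thesis unfolding Z_i using B_append_outside[OF assms(1) 3] i
      by (simp add: urn_increment_def)
  qed
qed

lemma urn_of_tree_append:
  assumes "valid_tree p par" and "1 \<le> j"
  shows "urn_of_tree \<alpha> l p j (par @ [v])
       = urn_update \<alpha> l p j (length par) (urn_of_tree \<alpha> l p j par) (colour j par v)"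
proof (rule urn_of_tree_eqI)
  note U = urn_update_eq_increment[OF colour_le[of j par v] assms(2)]
  show "urn_of_tree \<alpha> l p j (par @ [v]) i
      = urn_update \<alpha> l p j (length par) (urn_of_tree \<alpha> l p j par) (colour j par v) i"
    if "i \<le> j" for i
    using that urn_of_tree_append_small[OF assms(1) that] U by simp
  have "(\<Sum>i\<in>{0..Suc j}. urn_update \<alpha> l p j (length par) (urn_of_tree \<alpha> l p j par) (colour j par v) i)
      = (\<Sum>i\<in>{0..Suc j}. urn_of_tree \<alpha> l p j par i)
        + (\<Sum>i\<in>{0..Suc j}. urn_increment \<alpha> j (colour j par v) i)
        + (\<Sum>i\<in>{0..Suc j}. (if i = Suc j \<and> p dvd Suc (length par) then l else 0))"
    unfolding U by (simp add: sum.distrib)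
  also have "\<dots> = total_weight \<alpha> l p (length (par @ [v]))"
    using sum_urn_increment[OF colour_le assms(2)] sum_urn_of_tree by (simp add: total_weight_Suc)
  finally show "(\<Sum>i\<in>{0..Suc j}. urn_update \<alpha> l p j (length par) (urn_of_tree \<alpha> l p j par) (colour j par v) i)
      = total_weight \<alpha> l p (length (par @ [v]))" .
  show "urn_update \<alpha> l p j (length par) (urn_of_tree \<alpha> l p j par) (colour j par v) i = 0"
    if "i > Suc j" for i
    using that colour_le[of j par v] unfolding U by (auto simp: urn_of_tree_def urn_increment_def)
qed

section \<open>The tree chain lumps onto the urn chain\<close>

lemma pmf_of_list_wf_attach_weight:
  assumes "valid_tree p par" and "\<alpha> > 0" and "l > 0"
  shows "pmf_of_list_wf (map (\<lambda>v. (v, attach_weight \<alpha> l par v / total_weight \<alpha> l p (length par)))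
           (candidates p (length par)))"
  using attach_weight_nonneg[OF assms(2,3), of par] total_weight_pos[OF assms(2,3), of p "length par"]
    sum_attach_weight[OF assms(1), of \<alpha> l]
  by (intro pmf_of_list_wf_distinctI distinct_candidates)
    (auto intro: divide_nonneg_pos simp: sum_divide_distrib[symmetric])

lemma valid_tree_tree_step:
  assumes "valid_tree p par" and "\<alpha> > 0" and "l > 0" and "t \<in> set_pmf (tree_step \<alpha> l p par)"
  shows "valid_tree p t"
  using assms(4) set_pmf_of_list[OF pmf_of_list_wf_attach_weight[OF assms(1-3)]]
    valid_tree_append[OF assms(1)]
  unfolding tree_step_eq by auto

lemma map_pmf_colour_tree_step:
  assumes "valid_tree p par" and "\<alpha> > 0" and "l > 0"
  shows "map_pmf (colour j par) (pmf_of_list (map (\<lambda>v. (v, attach_weight \<alpha> l par v / total_weight \<alpha> l p (length par)))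
           (candidates p (length par))))
       = pmf_of_list (map (\<lambda>i. (i, urn_of_tree \<alpha> l p j par i / (\<Sum>i'\<in>{0..j + 1}. urn_of_tree \<alpha> l p j par i')))
           [0..<j + 2])"
  (is "map_pmf _ (pmf_of_list (map (\<lambda>v. (v, ?w v)) ?cands)) = ?urn")
proof -
  have "map_pmf (colour j par) (pmf_of_list (map (\<lambda>v. (v, ?w v)) ?cands))
      = pmf_of_list (map (\<lambda>i. (i, \<Sum>v\<in>{v\<in>set ?cands. colour j par v = i}. ?w v)) [0..<j + 2])"
    using colour_le[of j par]
    by (intro map_pmf_of_list_distinct distinct_candidates distinct_upt
        pmf_of_list_wf_attach_weight[OF assms]) (auto simp del: upt_Suc simp: less_Suc_eq_le)
  also have "\<dots> = ?urn"
  proof (intro arg_cong[where f=pmf_of_list] map_cong refl)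
    fix i assume "i \<in> set [0..<j + 2]"
    then have "i \<le> Suc j" by (simp del: upt_Suc)
    then show "(i, \<Sum>v\<in>{v\<in>set ?cands. colour j par v = i}. ?w v)
        = (i, urn_of_tree \<alpha> l p j par i / (\<Sum>i'\<in>{0..j + 1}. urn_of_tree \<alpha> l p j par i'))"
      using colour_weight[OF assms(1)] sum_urn_of_tree[of \<alpha> l p j par]
      by (simp add: sum_divide_distrib[symmetric])
  qed
  finally show ?thesis .
qed

lemma map_pmf_tree_step_urn_of_tree:
  assumes "valid_tree p par" and "\<alpha> > 0" and "l > 0" and "1 \<le> j"
  shows "map_pmf (\<lambda>q. (length q, urn_of_tree \<alpha> l p j q)) (tree_step \<alpha> l p par)
       = urn_step \<alpha> l p j (length par, urn_of_tree \<alpha> l p j par)"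
proof -
  let ?P = "pmf_of_list (map (\<lambda>v. (v, attach_weight \<alpha> l par v / total_weight \<alpha> l p (length par)))
              (candidates p (length par)))"
  let ?draw = "\<lambda>i. (Suc (length par), urn_update \<alpha> l p j (length par) (urn_of_tree \<alpha> l p j par) i)"
  have "map_pmf (\<lambda>q. (length q, urn_of_tree \<alpha> l p j q)) (tree_step \<alpha> l p par)
      = map_pmf (\<lambda>v. ?draw (colour j par v)) ?P"
    unfolding tree_step_eq by (simp add: pmf.map_comp o_def urn_of_tree_append[OF assms(1,4)])
  also have "\<dots> = map_pmf ?draw (map_pmf (colour j par) ?P)"
    by (simp add: pmf.map_comp o_def)
  finally show ?thesis
    unfolding map_pmf_colour_tree_step[OF assms(1-3)] urn_step_def by simp
qed

lemma urn_of_tree_Nil: "(0, urn_of_tree \<alpha> l p j []) = urn_init l"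
proof -
  have "urn_of_tree \<alpha> l p j [] = (\<lambda>_. 0)(0 := l)"
    by (rule ext) (simp add: urn_of_tree_def outdeg_def B_def total_weight_def)
  then show ?thesis by (simp add: urn_init_def)
qed

lemma B_vec_eq_Z_vec_urn_of_tree:
  assumes "\<alpha> > 0"
  shows "B_vec j par = Z_vec \<alpha> j (length par, urn_of_tree \<alpha> l p j par)"
proof -
  have "real (B par m) = urn_of_tree \<alpha> l p j par m / (real m * (\<alpha> + 1) - 1)"
    if "m \<in> set [1..<j + 1]" for m
  proof -
    have m: "1 \<le> m" "m \<le> j" using that by auto
    have "\<alpha> + 1 \<le> real m * (\<alpha> + 1)"
      using m(1) assms mult_right_mono[of 1 "real m" "\<alpha> + 1"] by simp
    then have "real m * (\<alpha> + 1) - 1 > 0" using assms by linarith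
    then show ?thesis using m by (simp add: urn_of_tree_def)
  qed
  then show ?thesis unfolding B_vec_def Z_vec_def by simp
qed

theorem mainTheorem12:
  fixes j p :: nat and \<alpha> l :: real
  assumes "j \<ge> 1" and "\<alpha> > 0" and "l > 0" and "p \<ge> 1"
  shows "\<forall>n. map_pmf (map (B_vec j)) (traj_law (tree_step \<alpha> l p) [] n)
            = map_pmf (map (Z_vec \<alpha> j)) (traj_law (urn_step \<alpha> l p j) (urn_init l) n)"
proof
  fix n
  let ?f = "\<lambda>q. (length q, urn_of_tree \<alpha> l p j q)"
  have "map_pmf (map ?f) (traj_law (tree_step \<alpha> l p) [] n) = traj_law (urn_step \<alpha> l p j) (?f []) n"
  proof (rule map_traj_law_lumping[where P = "valid_tree p"])
    show "valid_tree p []" by (simp add: valid_tree_def)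
  qed (use valid_tree_tree_step map_pmf_tree_step_urn_of_tree assms(1-3) in auto)
  then have "map_pmf (map ?f) (traj_law (tree_step \<alpha> l p) [] n) = traj_law (urn_step \<alpha> l p j) (urn_init l) n"
    by (simp add: urn_of_tree_Nil)
  moreover have "map_pmf (map (B_vec j)) (traj_law (tree_step \<alpha> l p) [] n)
      = map_pmf (map (Z_vec \<alpha> j)) (map_pmf (map ?f) (traj_law (tree_step \<alpha> l p) [] n))"
    using B_vec_eq_Z_vec_urn_of_tree[OF assms(2)] by (simp add: pmf.map_comp o_def)
  ultimately show "map_pmf (map (B_vec j)) (traj_law (tree_step \<alpha> l p) [] n)
            = map_pmf (map (Z_vec \<alpha> j)) (traj_law (urn_step \<alpha> l p j) (urn_init l) n)"
    by simp
qed

end
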